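(* Let $m\ge1$, let $a^0,\dots,a^{m-1}$ have absolutely summable Chebyshev coefficients, and let $\mathcal B$ be a linear map from finitely supported Chebyshev coefficient sequences to $\mathbb R^m$ with $\mathcal B\mathcal X$ invertible, $\mathbf b\in\mathbb R^m$. Then: (i) $\mathcal L\mathcal X=\mathcal S_{m-1}\cdots\mathcal S_0\mathcal A$; (ii) for every finitely supported sequence $\mathbf v$, setting $\mathbf u=\mathcal Q^m\mathbf v+\mathcal X(\mathcal B\mathcal X)^{-1}(\mathbf b-\mathcal B\mathcal Q^m\mathbf v)$, one has $\mathcal B\mathbf u=\mathbf b$ and $$\mathcal L\mathbf u=\mathcal S_{m-1}\cdots\mathcal S_0\big(\widetilde{\mathcal L}\mathbf v+\mathcal A(\mathcal B\mathcal X)^{-1}\mathbf b\big).$$ Consequently $\mathcal L\mathbf u=\mathcal S_{m-1}\cdots\mathcal S_0\mathbf f$ holds if and only if $\mathcal S_{m-1}\cdots\mathcal S_0\widetilde{\mathcal L}\mathbf v=\mathcal S_{m-1}\cdots\mathcal S_0\big(\mathbf f-\mathcal A(\mathcal B\mathcal X)^{-1}\mathbf b\big)$.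
   Context: All vectors are Chebyshev coefficient sequences. $\mathcal S_0$ (Chebyshev to $C^{(1)}$ coefficients) and $\mathcal S_\lambda$ ($C^{(\lambda)}$ to $C^{(\lambda+1)}$ coefficients) are the conversion operators; $\mathcal D_k$ maps Chebyshev coefficients of $u$ to $C^{(k)}$ coefficients of $u^{(k)}$; $\mathcal M_0[a]$ maps Chebyshev coefficients of $u$ to those of $au$; $\mathcal M_k[a]$ maps $C^{(k)}$ coefficients of $u$ to those of $au$; $\mathcal Q$ maps Chebyshev coefficients of $v$ to those of $\int_{-1}^x v(t)dt$. Define $$\mathcal L=\mathcal D_m+\sum_{k=1}^{m-1}\mathcal S_{m-1}\cdots\mathcal S_k\mathcal M_k[a^k]\mathcal D_k+\mathcal S_{m-1}\cdots\mathcal S_0\mathcal M_0[a^0],$$ $$\widetilde{\mathcal L}=\mathcal I+\sum_{k=0}^{m-1}\mathcal M_0[a^k]\mathcal Q^{m-k}-\mathcal A(\mathcal B\mathcal X)^{-1}\mathcal B\mathcal Q^m.$$ $\mathcal X=[\mathbf x^0\ \cdots\ \mathbf x^{m-1}]$ where $\mathbf x^j$ is the Chebyshev coefficient vector of $x^j$; $\mathcal B\mathcal X$ is the $m\times m$ matrix with columns $\mathcal B\mathbf x^j$; $\mathcal A=[\mathbf A_0\ \cdots\ \mathbf A_{m-1}]$ where $\mathbf A_j$ is the Chebyshev coefficient vector of $\sum_{k=0}^{j}\frac{j!}{(j-k)!}a^k(x)x^{j-k}$. *)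

theory Defs
  imports "HOL-Analysis.Analysis" "Jordan_Normal_Form.Matrix"
begin

text \<open>All sequences are coefficient sequences of type nat => real (index n = coefficient of
  the n-th basis polynomial).  Operators are given by their standard (ultraspherical spectral
  method, Olver--Townsend) coefficient formulas.\<close>

definition fin_supp :: "(nat \<Rightarrow> real) \<Rightarrow> bool" where
  "fin_supp c \<longleftrightarrow> finite {n. c n \<noteq> 0}"

fun chebT :: "nat \<Rightarrow> real \<Rightarrow> real" where
  "chebT 0 x = 1"
| "chebT (Suc 0) x = x"
| "chebT (Suc (Suc n)) x = 2 * x * chebT (Suc n) x - chebT n x"

definition xvec :: "nat \<Rightarrow> nat \<Rightarrow> real" where
  "xvec j = (THE c. (\<forall>n>j. c n = 0) \<and> (\<forall>x. (\<Sum>n\<le>j. c n * chebT n x) = x ^ j))"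

text \<open>Conversion operators: S_0 (Chebyshev to C^(1)), S_lambda (C^(lambda) to C^(lambda+1)), lambda \<ge> 1\<close>
definition convS :: "nat \<Rightarrow> (nat \<Rightarrow> real) \<Rightarrow> nat \<Rightarrow> real" where
  "convS lam c n =
     (if lam = 0 then (if n = 0 then c 0 - c 2 / 2 else (c n - c (n + 2)) / 2)
      else real lam / real (lam + n) * c n - real lam / real (lam + n + 2) * c (n + 2))"

fun Schain :: "nat \<Rightarrow> nat \<Rightarrow> (nat \<Rightarrow> real) \<Rightarrow> nat \<Rightarrow> real" where
  "Schain lo 0 c = c"
| "Schain lo (Suc k) c = convS (lo + k) (Schain lo k c)"

text \<open>Differentiation D_k (k \<ge> 1): Chebyshev coefficients of u to C^(k) coefficients of u^(k)\<close>
definition diffD :: "nat \<Rightarrow> (nat \<Rightarrow> real) \<Rightarrow> nat \<Rightarrow> real" where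
  "diffD k c n = 2 ^ (k - 1) * fact (k - 1) * real (n + k) * c (n + k)"

text \<open>Multiplication M_0[a] in Chebyshev coefficients (T_j T_k = (T_{j+k} + T_{|j-k|})/2)\<close>
definition mult0 :: "(nat \<Rightarrow> real) \<Rightarrow> (nat \<Rightarrow> real) \<Rightarrow> nat \<Rightarrow> real" where
  "mult0 a u n =
     (\<Sum>k\<le>n. a (n - k) * u k) / 2
     + (\<Sum>k. (a (k + n) + (if 1 \<le> n \<and> n \<le> k then a (k - n) else 0)) * u k) / 2"

text \<open>Multiplication M_k[a] in C^(k) coefficients (acting on finitely supported sequences):
  the C^(k) coefficients of a u, obtained by converting the C^(k) coefficients back to
  Chebyshev coefficients, multiplying there, and converting to C^(k).\<close>
definition multk :: "nat \<Rightarrow> (nat \<Rightarrow> real) \<Rightarrow> (nat \<Rightarrow> real) \<Rightarrow> nat \<Rightarrow> real" where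
  "multk k a v = Schain 0 k (mult0 a (THE w. fin_supp w \<and> Schain 0 k w = v))"

text \<open>Indefinite integration Q from -1 in Chebyshev coefficients\<close>
definition intQpos :: "(nat \<Rightarrow> real) \<Rightarrow> nat \<Rightarrow> real" where
  "intQpos v n = (if n = 0 then 0 else if n = 1 then v 0 - v 2 / 2
                  else (v (n - 1) - v (n + 1)) / (2 * real n))"

definition intQ :: "(nat \<Rightarrow> real) \<Rightarrow> nat \<Rightarrow> real" where
  "intQ v n = (if n = 0 then - (\<Sum>j. (-1) ^ (Suc j) * intQpos v (Suc j)) else intQpos v n)"

text \<open>The operator L, with a k the Chebyshev coefficients of a^k\<close>
definition opL :: "nat \<Rightarrow> (nat \<Rightarrow> nat \<Rightarrow> real) \<Rightarrow> (nat \<Rightarrow> real) \<Rightarrow> nat \<Rightarrow> real" where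
  "opL m a u = (\<lambda>n. diffD m u n
      + (\<Sum>k\<in>{1..m-1}. Schain k (m - k) (multk k (a k) (diffD k u)) n)
      + Schain 0 m (mult0 (a 0) u) n)"

definition Acol :: "(nat \<Rightarrow> nat \<Rightarrow> real) \<Rightarrow> nat \<Rightarrow> nat \<Rightarrow> real" where
  "Acol a j = (\<lambda>n. \<Sum>k\<le>j. fact j / fact (j - k) * mult0 (a k) (xvec (j - k)) n)"

definition BXmat :: "nat \<Rightarrow> ((nat \<Rightarrow> real) \<Rightarrow> real vec) \<Rightarrow> real mat" where
  "BXmat m B = mat m m (\<lambda>(i, j). B (xvec j) $ i)"

definition inv_matrix :: "nat \<Rightarrow> real mat \<Rightarrow> real mat" where
  "inv_matrix m M = (THE N. N \<in> carrier_mat m m \<and> M * N = 1\<^sub>m m \<and> N * M = 1\<^sub>m m)"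

definition applyX :: "nat \<Rightarrow> real vec \<Rightarrow> nat \<Rightarrow> real" where
  "applyX m w = (\<lambda>n. \<Sum>j<m. w $ j * xvec j n)"

definition applyA :: "nat \<Rightarrow> (nat \<Rightarrow> nat \<Rightarrow> real) \<Rightarrow> real vec \<Rightarrow> nat \<Rightarrow> real" where
  "applyA m a w = (\<lambda>n. \<Sum>j<m. w $ j * Acol a j n)"

definition opLt :: "nat \<Rightarrow> (nat \<Rightarrow> nat \<Rightarrow> real) \<Rightarrow> ((nat \<Rightarrow> real) \<Rightarrow> real vec)
                     \<Rightarrow> (nat \<Rightarrow> real) \<Rightarrow> nat \<Rightarrow> real" where
  "opLt m a B v = (\<lambda>n. v n + (\<Sum>k<m. mult0 (a k) ((intQ ^^ (m - k)) v) n)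
      - applyA m a (inv_matrix m (BXmat m B) *\<^sub>v B ((intQ ^^ m) v)) n)"

end

theory Submission
  imports Defs
begin

text \<open>On finitely supported coefficient sequences every conversion operator S_lambda is
  injective and S_0 is onto, so the derivative of u has well-defined Chebyshev coefficients: the
  unique d with S_0 d = D_1 u. Iterating, D_k = S_(k-1) ... S_0 applied to the k-th derivative,
  and therefore L = S_(m-1) ... S_0 F with F u = u^(m) + sum_k a^k u^(k) computed entirely in
  Chebyshev coefficients. F is linear, F(x^j) = A_j because (x^j)^(k) = j!/(j-k)! x^(j-k), and
  F(Q^m v) = v + sum_k a^k Q^(m-k) v because Q is a right inverse of differentiation. Splitting
  u = Q^m v + X w with w = (BX)^(-1) (b - B Q^m v) gives both claims.\<close>

section \<open>Finitely supported sequences and linear operators\<close>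

lemma fin_supp_iff: "fin_supp c \<longleftrightarrow> (\<exists>N. \<forall>n>N. c n = 0)"
proof
  assume "fin_supp c"
  then obtain N where "\<forall>n\<in>{n. c n \<noteq> 0}. n \<le> N"
    unfolding fin_supp_def using finite_nat_set_iff_bounded_le by blast
  then show "\<exists>N. \<forall>n>N. c n = 0" by (metis mem_Collect_eq not_le)
next
  assume "\<exists>N. \<forall>n>N. c n = 0"
  then obtain N where "\<forall>n>N. c n = 0" by blast
  then have "{n. c n \<noteq> 0} \<subseteq> {..N}" by (auto simp: not_less[symmetric])
  then show "fin_supp c" unfolding fin_supp_def using finite_subset by blast
qed

lemma fin_supp_intro: "(\<And>n. N < n \<Longrightarrow> c n = 0) \<Longrightarrow> fin_supp c"
  unfolding fin_supp_iff by blast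

lemma fin_supp_zero [simp]: "fin_supp (\<lambda>_. 0)"
  by (rule fin_supp_intro) simp

lemma fin_supp_common_bound:
  assumes "fin_supp u" "fin_supp w"
  obtains N where "\<forall>n>N. u n = 0" "\<forall>n>N. w n = 0"
proof -
  obtain N M where "\<forall>n>N. u n = 0" "\<forall>n>M. w n = 0" using assms by (auto simp: fin_supp_iff)
  then show ?thesis by (intro that[of "max N M"]) auto
qed

lemma fin_supp_add: "fin_supp u \<Longrightarrow> fin_supp w \<Longrightarrow> fin_supp (\<lambda>n. u n + w n)"
  by (metis (no_types, lifting) add_0 fin_supp_common_bound fin_supp_intro)

lemma fin_supp_diff: "fin_supp u \<Longrightarrow> fin_supp w \<Longrightarrow> fin_supp (\<lambda>n. u n - w n)"
  by (metis (no_types, lifting) diff_0_right fin_supp_common_bound fin_supp_intro)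

lemma fin_supp_scale: "fin_supp u \<Longrightarrow> fin_supp (\<lambda>n. c * u n)"
  by (auto simp: fin_supp_iff)

lemma fin_supp_sum:
  "finite J \<Longrightarrow> (\<And>j. j \<in> J \<Longrightarrow> fin_supp (g j)) \<Longrightarrow> fin_supp (\<lambda>n. \<Sum>j\<in>J. g j n)"
  by (induction J rule: finite_induct) (auto intro: fin_supp_add)

lemma fin_supp_lincomb:
  "finite J \<Longrightarrow> (\<And>j. j \<in> J \<Longrightarrow> fin_supp (g j)) \<Longrightarrow> fin_supp (\<lambda>n. \<Sum>j\<in>J. c j * g j n)"
  by (rule fin_supp_sum) (auto intro: fin_supp_scale)

lemma fin_supp_convS: "fin_supp c \<Longrightarrow> fin_supp (convS lam c)"
proof -
  assume "fin_supp c"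
  then obtain N where "\<forall>n>N. c n = 0" by (auto simp: fin_supp_iff)
  then show ?thesis by (intro fin_supp_intro[of N]) (simp add: convS_def)
qed

lemma fin_supp_Schain: "fin_supp c \<Longrightarrow> fin_supp (Schain lo k c)"
  by (induction k) (auto simp: fin_supp_convS)

lemma fin_supp_diffD: "fin_supp c \<Longrightarrow> fin_supp (diffD k c)"
proof -
  assume "fin_supp c"
  then obtain N where "\<forall>n>N. c n = 0" by (auto simp: fin_supp_iff)
  then show ?thesis by (intro fin_supp_intro[of N]) (simp add: diffD_def)
qed

text \<open>Linearity is only asked for on finitely supported sequences: off them the series in
  mult0 need not converge.\<close>
definition fs_linear :: "((nat \<Rightarrow> real) \<Rightarrow> nat \<Rightarrow> real) \<Rightarrow> bool" where
  "fs_linear F \<longleftrightarrow>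
     (\<forall>u w. fin_supp u \<longrightarrow> fin_supp w \<longrightarrow> F (\<lambda>n. u n + w n) = (\<lambda>n. F u n + F w n))
     \<and> (\<forall>c u. fin_supp u \<longrightarrow> F (\<lambda>n. c * u n) = (\<lambda>n. c * F u n))"

lemma fs_linearI:
  assumes "\<And>u w. fin_supp u \<Longrightarrow> fin_supp w \<Longrightarrow> F (\<lambda>n. u n + w n) = (\<lambda>n. F u n + F w n)"
    and "\<And>c u. fin_supp u \<Longrightarrow> F (\<lambda>n. c * u n) = (\<lambda>n. c * F u n)"
  shows "fs_linear F"
  using assms by (simp add: fs_linear_def)

lemma fs_linear_add:
  "fs_linear F \<Longrightarrow> fin_supp u \<Longrightarrow> fin_supp w \<Longrightarrow> F (\<lambda>n. u n + w n) = (\<lambda>n. F u n + F w n)"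
  by (simp add: fs_linear_def)

lemma fs_linear_scale: "fs_linear F \<Longrightarrow> fin_supp u \<Longrightarrow> F (\<lambda>n. c * u n) = (\<lambda>n. c * F u n)"
  by (simp add: fs_linear_def)

lemma fs_linear_zero: "fs_linear F \<Longrightarrow> F (\<lambda>_. 0) = (\<lambda>_. 0)"
  using fs_linear_scale[of F "\<lambda>_. 0" 0] by simp

lemma fs_linear_sum:
  assumes F: "fs_linear F" and "finite J" and "\<And>j. j \<in> J \<Longrightarrow> fin_supp (g j)"
  shows "F (\<lambda>n. \<Sum>j\<in>J. c j * g j n) = (\<lambda>n. \<Sum>j\<in>J. c j * F (g j) n)"
  using assms(2,3)
proof (induction J rule: finite_induct)
  case empty
  then show ?case using fs_linear_zero[OF F] by simp
next
  case (insert x J)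
  have "fin_supp (\<lambda>n. c x * g x n)" "fin_supp (\<lambda>n. \<Sum>j\<in>J. c j * g j n)"
    using insert by (auto intro: fin_supp_scale fin_supp_lincomb)
  then show ?case using insert fs_linear_add[OF F] fs_linear_scale[OF F] by simp
qed

lemma fs_linear_comp:
  assumes "fs_linear F" "fs_linear G" "\<And>u. fin_supp u \<Longrightarrow> fin_supp (G u)"
  shows "fs_linear (\<lambda>u. F (G u))"
  using assms by (intro fs_linearI) (auto simp: fs_linear_add fs_linear_scale intro: fin_supp_scale)

lemma fs_linear_funpow:
  assumes "fs_linear F" "\<And>u. fin_supp u \<Longrightarrow> fin_supp (F u)"
  shows "fs_linear (F ^^ k)"
proof (induction k)
  case 0
  show ?case by (intro fs_linearI) simp_all
next
  case (Suc k)
  have "\<And>u. fin_supp u \<Longrightarrow> fin_supp ((F ^^ k) u)"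
    by (induction k) (simp_all add: assms(2))
  then show ?case using fs_linear_comp[OF assms(1) Suc] by simp
qed

lemma fs_linear_plus:
  "fs_linear F \<Longrightarrow> fs_linear G \<Longrightarrow> fs_linear (\<lambda>u n. F u n + G u n)"
  by (intro fs_linearI) (simp_all add: fs_linear_add fs_linear_scale algebra_simps)

lemma fs_linear_sum_op:
  "(\<And>k. k \<in> K \<Longrightarrow> fs_linear (F k)) \<Longrightarrow> fs_linear (\<lambda>u n. \<Sum>k\<in>K. F k u n)"
  by (intro fs_linearI) (simp_all add: fs_linear_add fs_linear_scale sum.distrib sum_distrib_left)

lemma convS_add: "convS lam (\<lambda>n. u n + w n) = (\<lambda>n. convS lam u n + convS lam w n)"
  by (auto simp: convS_def fun_eq_iff algebra_simps add_divide_distrib diff_divide_distrib)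

lemma convS_diff: "convS lam (\<lambda>n. u n - w n) = (\<lambda>n. convS lam u n - convS lam w n)"
  by (auto simp: convS_def fun_eq_iff algebra_simps add_divide_distrib diff_divide_distrib)

lemma convS_scale: "convS lam (\<lambda>n. c * u n) = (\<lambda>n. c * convS lam u n)"
  by (auto simp: convS_def fun_eq_iff algebra_simps add_divide_distrib diff_divide_distrib)

lemma Schain_add: "Schain lo k (\<lambda>n. u n + w n) = (\<lambda>n. Schain lo k u n + Schain lo k w n)"
  by (induction k) (auto simp: convS_add)

lemma Schain_diff: "Schain lo k (\<lambda>n. u n - w n) = (\<lambda>n. Schain lo k u n - Schain lo k w n)"
  by (induction k) (auto simp: convS_diff)

lemma Schain_sum:
  "finite J \<Longrightarrow> Schain lo k (\<lambda>n. \<Sum>j\<in>J. g j n) = (\<lambda>n. \<Sum>j\<in>J. Schain lo k (g j) n)"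
proof (induction J rule: finite_induct)
  case empty
  have "Schain lo k (\<lambda>_. 0) = (\<lambda>_. 0)"
    using Schain_diff[of lo k "\<lambda>_. 0" "\<lambda>_. 0"] by simp
  then show ?case by simp
next
  case (insert x F)
  then show ?case by (simp add: Schain_add)
qed

lemma Schain_Schain: "Schain (lo + i) j (Schain lo i c) = Schain lo (i + j) c"
  by (induction j) (auto simp: add.assoc)

lemma diffD_add: "diffD k (\<lambda>n. u n + w n) = (\<lambda>n. diffD k u n + diffD k w n)"
  by (auto simp: diffD_def fun_eq_iff algebra_simps)

lemma diffD_scale: "diffD k (\<lambda>n. c * u n) = (\<lambda>n. c * diffD k u n)"
  by (auto simp: diffD_def fun_eq_iff algebra_simps)

lemma mult0_eq_finite_sum:
  assumes "\<forall>k>N. u k = 0"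
  shows "mult0 a u n = (\<Sum>k\<le>n. a (n - k) * u k) / 2
     + (\<Sum>k\<le>N. (a (k + n) + (if 1 \<le> n \<and> n \<le> k then a (k - n) else 0)) * u k) / 2"
  unfolding mult0_def using assms by (subst suminf_finite[of "{..N}"]) (auto simp: not_le)

lemma fs_linear_mult0: "fs_linear (mult0 a)"
proof (rule fs_linearI)
  fix u w :: "nat \<Rightarrow> real" assume "fin_supp u" "fin_supp w"
  then obtain N where "\<forall>k>N. u k = 0" "\<forall>k>N. w k = 0" by (rule fin_supp_common_bound)
  then show "mult0 a (\<lambda>n. u n + w n) = (\<lambda>n. mult0 a u n + mult0 a w n)"
    by (simp add: fun_eq_iff mult0_eq_finite_sum[of N] sum.distrib algebra_simps add_divide_distrib)
next
  fix c and u :: "nat \<Rightarrow> real" assume "fin_supp u"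
  then obtain N where "\<forall>k>N. u k = 0" unfolding fin_supp_iff by blast
  then show "mult0 a (\<lambda>n. c * u n) = (\<lambda>n. c * mult0 a u n)"
    by (simp add: fun_eq_iff mult0_eq_finite_sum[of N] sum_distrib_left algebra_simps add_divide_distrib)
qed

section \<open>Conversion and the Chebyshev derivative\<close>

lemma convS_eq_0_imp:
  assumes "fin_supp z" "convS lam z = (\<lambda>_. 0)"
  shows "z = (\<lambda>_. 0)"
proof (rule ccontr)
  assume "z \<noteq> (\<lambda>_. 0)"
  then have ne: "{n. z n \<noteq> 0} \<noteq> {}" by auto
  have fin: "finite {n. z n \<noteq> 0}" using assms(1) fin_supp_def by blast
  define M where "M = Max {n. z n \<noteq> 0}"
  have "z M \<noteq> 0" using Max_in[OF fin ne] M_def by auto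
  moreover have "z (M + 2) = 0" using Max_ge[OF fin, of "M + 2"] M_def by force
  moreover have "convS lam z M = 0" using assms(2) by metis
  ultimately show False
    by (cases "lam = 0") (auto simp: convS_def numeral_2_eq_2 split: if_splits)
qed

lemma convS_inj: "fin_supp x \<Longrightarrow> fin_supp y \<Longrightarrow> convS lam x = convS lam y \<Longrightarrow> x = y"
  using convS_eq_0_imp[of "\<lambda>n. x n - y n" lam]
  by (auto simp: convS_diff fin_supp_diff fun_eq_iff)

lemma Schain_inj: "fin_supp c \<Longrightarrow> fin_supp d \<Longrightarrow> Schain lo k c = Schain lo k d \<Longrightarrow> c = d"
proof (induction k)
  case (Suc k)
  then show ?case using convS_inj fin_supp_Schain by (metis Schain.simps(2))
qed simp

text \<open>A preimage under S_0 is built from the top coefficient down: if g vanishes beyond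
  M + 1, then g minus the image of 2 g(M+1) e_(M+1) vanishes beyond M.\<close>
lemma convS0_onto_fin_supp: "fin_supp g \<Longrightarrow> \<exists>d. fin_supp d \<and> convS 0 d = g"
proof -
  have "\<forall>g. (\<forall>n>N. g n = 0) \<longrightarrow> (\<exists>d. fin_supp d \<and> convS 0 d = g)" for N
  proof (induction N)
    case 0
    show ?case
    proof (intro allI impI)
      fix g :: "nat \<Rightarrow> real" assume "\<forall>n>0. g n = 0"
      then have "convS 0 g = g" "fin_supp g" by (auto simp: convS_def fun_eq_iff fin_supp_iff)
      then show "\<exists>d. fin_supp d \<and> convS 0 d = g" by blast
    qed
  next
    case (Suc M)
    show ?case
    proof (intro allI impI)
      fix g :: "nat \<Rightarrow> real" assume g: "\<forall>n>Suc M. g n = 0"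
      define d1 where "d1 = (\<lambda>n. if n = Suc M then 2 * g (Suc M) else (0::real))"
      have "g n - convS 0 d1 n = 0" if "n > M" for n
      proof -
        have "n = Suc M \<or> n > Suc M" using that by auto
        then show ?thesis using g by (auto simp: convS_def d1_def)
      qed
      then obtain d2 where d2: "fin_supp d2" "convS 0 d2 = (\<lambda>n. g n - convS 0 d1 n)"
        using Suc by (metis (no_types, lifting))
      have "fin_supp d1" by (rule fin_supp_intro[of "Suc M"]) (simp add: d1_def)
      moreover have "convS 0 (\<lambda>n. d1 n + d2 n) = g" using d2(2) by (simp add: convS_add)
      ultimately show "\<exists>d. fin_supp d \<and> convS 0 d = g" using d2(1) fin_supp_add by blast
    qed
  qed
  then show "fin_supp g \<Longrightarrow> ?thesis" unfolding fin_supp_iff by blast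
qed

definition cheb_deriv :: "(nat \<Rightarrow> real) \<Rightarrow> nat \<Rightarrow> real" where
  "cheb_deriv u = (THE d. fin_supp d \<and> convS 0 d = diffD 1 u)"

lemma cheb_deriv:
  assumes "fin_supp u"
  shows "fin_supp (cheb_deriv u)" "convS 0 (cheb_deriv u) = diffD 1 u"
proof -
  have "\<exists>!d. fin_supp d \<and> convS 0 d = diffD 1 u"
    using convS0_onto_fin_supp[OF fin_supp_diffD[OF assms]] convS_inj by metis
  from theI'[OF this] show "fin_supp (cheb_deriv u)" "convS 0 (cheb_deriv u) = diffD 1 u"
    unfolding cheb_deriv_def by simp_all
qed

lemma cheb_deriv_eqI: "fin_supp u \<Longrightarrow> fin_supp d \<Longrightarrow> convS 0 d = diffD 1 u \<Longrightarrow> cheb_deriv u = d"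
  using cheb_deriv convS_inj by metis

lemma fin_supp_cheb_deriv_funpow [simp]: "fin_supp u \<Longrightarrow> fin_supp ((cheb_deriv ^^ k) u)"
  by (induction k) (simp_all add: cheb_deriv)

lemma fs_linear_cheb_deriv: "fs_linear cheb_deriv"
  by (intro fs_linearI cheb_deriv_eqI)
    (simp_all add: cheb_deriv fin_supp_add fin_supp_scale convS_add convS_scale diffD_add diffD_scale)

lemma fs_linear_cheb_deriv_funpow: "fs_linear (cheb_deriv ^^ k)"
  using fs_linear_funpow[OF fs_linear_cheb_deriv] cheb_deriv(1) by blast

lemma convS0_eq_diffD1_iff:
  "convS 0 d = diffD 1 u \<longleftrightarrow>
     d 0 - d 2 / 2 = u 1 \<and> (\<forall>i\<ge>1. d i - d (i + 2) = 2 * real (i + 1) * u (i + 1))"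
proof -
  have "convS 0 d i = diffD 1 u i \<longleftrightarrow> d i - d (i + 2) = 2 * real (i + 1) * u (i + 1)"
    if "i \<ge> 1" for i
    using that by (auto simp: convS_def diffD_def field_simps)
  moreover have "convS 0 d 0 = diffD 1 u 0 \<longleftrightarrow> d 0 - d 2 / 2 = u 1"
    by (simp add: convS_def diffD_def)
  ultimately show ?thesis unfolding fun_eq_iff by (metis less_one not_less)
qed

lemma cheb_deriv_rec:
  "fin_supp u \<Longrightarrow> i \<ge> 1 \<Longrightarrow> cheb_deriv u i - cheb_deriv u (i + 2) = 2 * real (i + 1) * u (i + 1)"
  using cheb_deriv(2) convS0_eq_diffD1_iff by blast

lemma diffD_Suc:
  assumes "fin_supp u" "k \<ge> 1"
  shows "diffD (Suc k) u = convS k (diffD k (cheb_deriv u))"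
proof
  fix n
  have e1: "real k / real (k + n) * real (n + k) = real k"
    using assms(2) by (simp add: add.commute)
  have e2: "real k / real (k + n + 2) * real (n + 2 + k) = real k"
    using assms(2) by (simp add: add.commute add.left_commute)
  let ?c = "2 ^ (k - 1) * fact (k - 1) :: real"
  have "convS k (diffD k (cheb_deriv u)) n
      = real k / real (k + n) * (?c * real (n + k) * cheb_deriv u (n + k))
        - real k / real (k + n + 2) * (?c * real (n + 2 + k) * cheb_deriv u (n + 2 + k))"
    using assms(2) by (simp add: convS_def diffD_def)
  also have "\<dots> = ?c * (real k / real (k + n) * real (n + k)) * cheb_deriv u (n + k)
        - ?c * (real k / real (k + n + 2) * real (n + 2 + k)) * cheb_deriv u (n + 2 + k)"
    by (simp only: mult_ac)
  also have "\<dots> = ?c * real k * (cheb_deriv u (n + k) - cheb_deriv u (n + k + 2))"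
    by (simp only: e1 e2) (simp add: algebra_simps)
  also have "\<dots> = ?c * real k * (2 * real (n + k + 1) * u (n + k + 1))"
    using cheb_deriv_rec[OF assms(1), of "n + k"] assms(2) by simp
  also have "\<dots> = diffD (Suc k) u n"
    using assms(2) by (cases k) (simp_all add: diffD_def algebra_simps)
  finally show "diffD (Suc k) u n = convS k (diffD k (cheb_deriv u)) n" by simp
qed

lemma diffD_eq_Schain: "fin_supp u \<Longrightarrow> diffD (Suc k) u = Schain 0 (Suc k) ((cheb_deriv ^^ Suc k) u)"
proof (induction k arbitrary: u)
  case 0
  then show ?case using cheb_deriv by simp
next
  case (Suc k)
  have "diffD (Suc (Suc k)) u = convS (Suc k) (diffD (Suc k) (cheb_deriv u))"
    using diffD_Suc Suc.prems by simp
  also have "\<dots> = convS (Suc k) (Schain 0 (Suc k) ((cheb_deriv ^^ Suc k) (cheb_deriv u)))"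
    using Suc cheb_deriv by simp
  finally show ?case by (simp only: funpow_Suc_right comp_def Schain.simps add_0)
qed

lemma multk_diffD:
  assumes "fin_supp u" "k \<ge> 1"
  shows "multk k a (diffD k u) = Schain 0 k (mult0 a ((cheb_deriv ^^ k) u))"
proof -
  have "diffD k u = Schain 0 k ((cheb_deriv ^^ k) u)"
    using diffD_eq_Schain[OF assms(1), of "k - 1"] assms(2) by simp
  then have "(THE w. fin_supp w \<and> Schain 0 k w = diffD k u) = (cheb_deriv ^^ k) u"
    using assms(1) Schain_inj by (intro the_equality) auto
  then show ?thesis unfolding multk_def by simp
qed

definition cheb_ode_op :: "nat \<Rightarrow> (nat \<Rightarrow> nat \<Rightarrow> real) \<Rightarrow> (nat \<Rightarrow> real) \<Rightarrow> nat \<Rightarrow> real" where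
  "cheb_ode_op m a u = (\<lambda>n. (cheb_deriv ^^ m) u n + (\<Sum>k<m. mult0 (a k) ((cheb_deriv ^^ k) u) n))"

lemma fs_linear_cheb_ode_op: "fs_linear (cheb_ode_op m a)"
proof -
  have "fs_linear (\<lambda>u. mult0 (a k) ((cheb_deriv ^^ k) u))" for k
    by (rule fs_linear_comp[OF fs_linear_mult0 fs_linear_cheb_deriv_funpow]) simp
  then show ?thesis
    unfolding cheb_ode_op_def by (intro fs_linear_plus fs_linear_sum_op fs_linear_cheb_deriv_funpow)
qed

lemma opL_eq_Schain:
  assumes "m \<ge> 1" "fin_supp u"
  shows "opL m a u = Schain 0 m (cheb_ode_op m a u)"
proof -
  have top: "diffD m u = Schain 0 m ((cheb_deriv ^^ m) u)"
    using diffD_eq_Schain[OF assms(2), of "m - 1"] assms(1) by simp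
  have mid: "Schain k (m - k) (multk k (a k) (diffD k u))
      = Schain 0 m (mult0 (a k) ((cheb_deriv ^^ k) u))" if "k \<in> {1..m-1}" for k
  proof -
    have "k + (m - k) = m" using that by auto
    then show ?thesis using that multk_diffD[OF assms(2)] Schain_Schain[of 0 k "m - k"] by simp
  qed
  have "{..<m} = insert 0 {1..m-1}" using assms(1) by auto
  then have "Schain 0 m (cheb_ode_op m a u) = (\<lambda>n. Schain 0 m ((cheb_deriv ^^ m) u) n
      + (\<Sum>k\<in>{1..m-1}. Schain 0 m (mult0 (a k) ((cheb_deriv ^^ k) u)) n)
      + Schain 0 m (mult0 (a 0) u) n)"
    unfolding cheb_ode_op_def by (simp add: Schain_add Schain_sum algebra_simps)
  then show ?thesis
    unfolding opL_def top by (simp add: mid)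
qed

section \<open>Indefinite integration\<close>

lemma fin_supp_intQ: "fin_supp v \<Longrightarrow> fin_supp (intQ v)"
proof -
  assume "fin_supp v"
  then obtain N where "\<forall>n>N. v n = 0" by (auto simp: fin_supp_iff)
  then show ?thesis by (intro fin_supp_intro[of "N + 1"]) (simp add: intQ_def intQpos_def)
qed

lemma fin_supp_intQ_funpow [simp]: "fin_supp v \<Longrightarrow> fin_supp ((intQ ^^ k) v)"
  by (induction k) (simp_all add: fin_supp_intQ)

lemma convS0_eq_diffD1_intQ: "convS 0 v = diffD 1 (intQ v)"
proof
  fix n
  have "real (Suc n) * ((v n - v (Suc n + 1)) / (2 * real (Suc n))) = (v n - v (n + 2)) / 2"
    by (simp add: field_simps)
  then show "convS 0 v n = diffD 1 (intQ v) n"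
    by (cases "n = 0") (simp_all add: convS_def diffD_def intQ_def intQpos_def)
qed

lemma cheb_deriv_intQ: "fin_supp v \<Longrightarrow> cheb_deriv (intQ v) = v"
  by (rule cheb_deriv_eqI) (simp_all add: fin_supp_intQ convS0_eq_diffD1_intQ)

lemma cheb_deriv_funpow_intQ_funpow:
  "fin_supp v \<Longrightarrow> k \<le> m \<Longrightarrow> (cheb_deriv ^^ k) ((intQ ^^ m) v) = (intQ ^^ (m - k)) v"
proof (induction k)
  case (Suc k)
  then have "(intQ ^^ (m - k)) v = intQ ((intQ ^^ (m - Suc k)) v)"
    by (metis Suc_diff_le Suc_le_D diff_Suc_Suc funpow.simps(2) o_apply Suc_le_eq)
  then show ?case using Suc cheb_deriv_intQ by simp
qed simp

lemma cheb_ode_op_intQ_funpow: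
  "fin_supp v \<Longrightarrow>
     cheb_ode_op m a ((intQ ^^ m) v) = (\<lambda>n. v n + (\<Sum>k<m. mult0 (a k) ((intQ ^^ (m - k)) v) n))"
  by (simp add: cheb_ode_op_def cheb_deriv_funpow_intQ_funpow)

section \<open>Monomials in the Chebyshev basis\<close>

fun chebP :: "nat \<Rightarrow> real poly" where
  "chebP 0 = 1"
| "chebP (Suc 0) = [:0, 1:]"
| "chebP (Suc (Suc n)) = pCons 0 (Polynomial.smult 2 (chebP (Suc n))) - chebP n"

lemma poly_chebP: "poly (chebP n) x = chebT n x"
  by (induction n rule: chebP.induct) (auto simp: algebra_simps)

lemma coeff_chebP: "(\<forall>k>n. coeff (chebP n) k = 0) \<and> coeff (chebP n) n \<noteq> 0"
proof (induction n rule: chebP.induct)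
  case (3 n)
  have "coeff (chebP (Suc (Suc n))) k = 0" if "k > Suc (Suc n)" for k
    using 3 that by (cases k) (auto simp: coeff_diff)
  moreover have "coeff (chebP (Suc (Suc n))) (Suc (Suc n)) = 2 * coeff (chebP (Suc n)) (Suc n)"
    using 3 by (auto simp: coeff_diff)
  ultimately show ?case using 3 by auto
qed (auto simp: coeff_1 coeff_pCons split: nat.split)

lemma chebT_expansion_unique:
  assumes "\<forall>n>j. c n = 0" "\<forall>x. (\<Sum>n\<le>j. c n * chebT n x) = 0"
  shows "c n = 0"
  using assms
proof (induction j arbitrary: n)
  case (Suc j)
  define p where "p = (\<Sum>n\<le>Suc j. Polynomial.smult (c n) (chebP n))"
  have "\<forall>x. poly p x = 0" using Suc.prems(2) by (simp add: p_def poly_sum poly_chebP)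
  then have "p = 0" using poly_all_0_iff_0 by blast
  moreover have "coeff p (Suc j) = c (Suc j) * coeff (chebP (Suc j)) (Suc j)"
    unfolding p_def coeff_sum using coeff_chebP by (simp add: sum.atMost_Suc)
  ultimately have "c (Suc j) = 0" using coeff_chebP by simp
  then have "\<forall>n>j. c n = 0" using Suc.prems(1) by (metis Suc_lessI)
  then show ?case using Suc \<open>c (Suc j) = 0\<close> by simp
qed (simp, metis gr0I)

text \<open>Multiplication by x, from x T_0 = T_1 and x T_n = (T_(n-1) + T_(n+1)) / 2.\<close>
definition cheb_mult_x :: "(nat \<Rightarrow> real) \<Rightarrow> nat \<Rightarrow> real" where
  "cheb_mult_x c n =
     (if n = 0 then c 1 / 2 else if n = 1 then c 0 + c 2 / 2 else (c (n - 1) + c (n + 1)) / 2)"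

lemma sum_cheb_mult_x:
  "N \<ge> 1 \<Longrightarrow> (\<Sum>n\<le>N. cheb_mult_x c n * chebT n x)
     = x * (\<Sum>n\<le>N. c n * chebT n x) + (c (N + 1) * chebT N x - c N * chebT (N + 1) x) / 2"
proof (induction N)
  case (Suc N)
  show ?case
  proof (cases "N = 0")
    case True
    then show ?thesis by (auto simp: cheb_mult_x_def numeral_2_eq_2 field_simps)
  next
    case False
    then show ?thesis
      using Suc by (simp add: cheb_mult_x_def algebra_simps add_divide_distrib diff_divide_distrib)
  qed
qed simp

lemma fin_supp_cheb_mult_x: "fin_supp c \<Longrightarrow> fin_supp (cheb_mult_x c)"
proof -
  assume "fin_supp c"
  then obtain N where "\<forall>n>N. c n = 0" by (auto simp: fin_supp_iff)
  then show ?thesis by (intro fin_supp_intro[of "N + 1"]) (simp add: cheb_mult_x_def)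
qed

lemma cheb_mult_x_scale: "cheb_mult_x (\<lambda>n. a * u n) = (\<lambda>n. a * cheb_mult_x u n)"
  by (auto simp: cheb_mult_x_def fun_eq_iff algebra_simps add_divide_distrib)

lemma cheb_deriv_cheb_mult_x:
  assumes c: "fin_supp c"
  shows "cheb_deriv (cheb_mult_x c) = (\<lambda>n. c n + cheb_mult_x (cheb_deriv c) n)"
proof (rule cheb_deriv_eqI)
  show "fin_supp (cheb_mult_x c)" "fin_supp (\<lambda>n. c n + cheb_mult_x (cheb_deriv c) n)"
    using c by (simp_all add: fin_supp_cheb_mult_x fin_supp_add cheb_deriv)
  define e where "e = cheb_deriv c"
  have e0: "e 0 - e 2 / 2 = c 1"
    and ei: "\<And>i. i \<ge> 1 \<Longrightarrow> e i - e (i + 2) = 2 * real (i + 1) * c (i + 1)"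
    using cheb_deriv(2)[OF c] unfolding e_def convS0_eq_diffD1_iff by auto
  have e13: "e 1 - e 3 = 4 * c 2" and e24: "e 2 - e 4 = 6 * c 3"
    using ei[of 1] ei[of 2] by (simp_all add: eval_nat_numeral)
  let ?d = "\<lambda>n. c n + cheb_mult_x e n"
  have "?d 0 - ?d 2 / 2 = cheb_mult_x c 1"
    using e13 by (simp add: cheb_mult_x_def eval_nat_numeral field_simps)
  moreover have "?d i - ?d (i + 2) = 2 * real (i + 1) * cheb_mult_x c (i + 1)" if "i \<ge> 1" for i
  proof (cases "i = 1")
    case True
    then show ?thesis using e0 e24 by (simp add: cheb_mult_x_def eval_nat_numeral field_simps)
  next
    case False
    define k where "k = i - 2"
    have k: "i = k + 2" using that False by (simp add: k_def)
    have "e (k + 1) - e (k + 3) = 2 * real (k + 2) * c (k + 2)"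
      "e (k + 3) - e (k + 5) = 2 * real (k + 4) * c (k + 4)"
      using ei[of "k + 1"] ei[of "k + 3"] by (simp_all add: eval_nat_numeral)
    then show ?thesis unfolding k by (simp add: cheb_mult_x_def eval_nat_numeral field_simps)
  qed
  ultimately show "convS 0 ?d = diffD 1 (cheb_mult_x c)"
    unfolding convS0_eq_diffD1_iff e_def by blast
qed

definition cheb_monomial :: "nat \<Rightarrow> nat \<Rightarrow> real" where
  "cheb_monomial j = (cheb_mult_x ^^ j) (\<lambda>n. if n = 0 then 1 else 0)"

lemma cheb_monomial_vanishes: "\<forall>n>j. cheb_monomial j n = 0"
  by (induction j) (auto simp: cheb_monomial_def cheb_mult_x_def)

lemma cheb_monomial_expansion: "(\<Sum>n\<le>j. cheb_monomial j n * chebT n x) = x ^ j"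
proof (induction j)
  case (Suc j)
  have "(\<Sum>n\<le>Suc j. cheb_monomial (Suc j) n * chebT n x)
      = x * (\<Sum>n\<le>Suc j. cheb_monomial j n * chebT n x)
        + (cheb_monomial j (Suc j + 1) * chebT (Suc j) x
           - cheb_monomial j (Suc j) * chebT (Suc j + 1) x) / 2"
    unfolding cheb_monomial_def funpow.simps o_apply by (rule sum_cheb_mult_x) simp
  also have "\<dots> = x * (\<Sum>n\<le>j. cheb_monomial j n * chebT n x)"
    using cheb_monomial_vanishes[of j] by simp
  finally show ?case using Suc by simp
qed (simp add: cheb_monomial_def)

lemma xvec_eq_cheb_monomial: "xvec j = cheb_monomial j"
  unfolding xvec_def
proof (rule the_equality)
  show "(\<forall>n>j. cheb_monomial j n = 0) \<and> (\<forall>x. (\<Sum>n\<le>j. cheb_monomial j n * chebT n x) = x ^ j)"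
    using cheb_monomial_vanishes cheb_monomial_expansion by blast
next
  fix c assume c: "(\<forall>n>j. c n = 0) \<and> (\<forall>x. (\<Sum>n\<le>j. c n * chebT n x) = x ^ j)"
  have "(\<Sum>n\<le>j. (c n - cheb_monomial j n) * chebT n x) = 0" for x
    using c cheb_monomial_expansion[of j x] by (simp add: left_diff_distrib sum_subtractf)
  then have "c n - cheb_monomial j n = 0" for n
    using c cheb_monomial_vanishes[of j] by (intro chebT_expansion_unique[of j]) auto
  then show "c = cheb_monomial j" by (simp add: fun_eq_iff)
qed

lemma xvec_0: "xvec 0 = (\<lambda>n. if n = 0 then 1 else 0)"
  by (simp add: xvec_eq_cheb_monomial cheb_monomial_def)

lemma xvec_Suc: "xvec (Suc j) = cheb_mult_x (xvec j)"
  by (simp add: xvec_eq_cheb_monomial cheb_monomial_def)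

lemma fin_supp_xvec [simp]: "fin_supp (xvec j)"
  using cheb_monomial_vanishes fin_supp_iff xvec_eq_cheb_monomial by metis

lemma cheb_deriv_xvec: "cheb_deriv (xvec j) = (\<lambda>n. real j * xvec (j - 1) n)"
proof (induction j)
  case 0
  show ?case
    using fin_supp_xvec[of 0] by (intro cheb_deriv_eqI) (auto simp: xvec_0 diffD_def convS_def fun_eq_iff)
next
  case (Suc j)
  have "cheb_deriv (xvec (Suc j)) = (\<lambda>n. xvec j n + real j * cheb_mult_x (xvec (j - 1)) n)"
    unfolding xvec_Suc cheb_deriv_cheb_mult_x[OF fin_supp_xvec] Suc cheb_mult_x_scale ..
  also have "\<dots> = (\<lambda>n. real (Suc j) * xvec j n)"
    by (cases j) (simp_all add: xvec_Suc algebra_simps)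
  finally show ?case by simp
qed

lemma cheb_deriv_funpow_xvec:
  "(cheb_deriv ^^ k) (xvec j) = (\<lambda>n. (if k \<le> j then fact j / fact (j - k) else 0) * xvec (j - k) n)"
proof (induction k)
  case (Suc k)
  define C where "C = (if k \<le> j then fact j / fact (j - k) else (0::real))"
  have "(cheb_deriv ^^ Suc k) (xvec j) = (\<lambda>n. C * real (j - k) * xvec (j - Suc k) n)"
    using Suc fs_linear_scale[OF fs_linear_cheb_deriv]
    by (simp add: C_def cheb_deriv_xvec mult.assoc)
  moreover have "C * real (j - k) = (if Suc k \<le> j then fact j / fact (j - Suc k) else 0)"
  proof (cases "Suc k \<le> j")
    case True
    then have "fact (j - k) = real (j - k) * fact (j - Suc k)"
      by (metis Suc_diff_le diff_Suc_Suc fact_Suc of_nat_fact of_nat_mult Suc_le_D)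
    then show ?thesis using True by (simp add: C_def)
  qed (auto simp: C_def)
  ultimately show ?case by simp
qed simp

lemma cheb_ode_op_xvec: "j < m \<Longrightarrow> cheb_ode_op m a (xvec j) = Acol a j"
proof
  fix n assume j: "j < m"
  have "cheb_ode_op m a (xvec j) n
      = (\<Sum>k<m. (if k \<le> j then fact j / fact (j - k) else 0) * mult0 (a k) (xvec (j - k)) n)"
    using j fs_linear_scale[OF fs_linear_mult0]
    by (simp add: cheb_ode_op_def cheb_deriv_funpow_xvec)
  also have "\<dots> = (\<Sum>k\<le>j. fact j / fact (j - k) * mult0 (a k) (xvec (j - k)) n)"
    using j by (intro sum.mono_neutral_cong_right) auto
  finally show "cheb_ode_op m a (xvec j) n = Acol a j n" by (simp add: Acol_def)
qed

section \<open>Lifting the boundary data\<close>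

lemma fin_supp_applyX [simp]: "fin_supp (applyX m w)"
  unfolding applyX_def by (rule fin_supp_lincomb) simp_all

lemma cheb_ode_op_add_applyX:
  "fin_supp q \<Longrightarrow>
     cheb_ode_op m a (\<lambda>n. q n + applyX m w n) = (\<lambda>n. cheb_ode_op m a q n + applyA m a w n)"
proof -
  assume q: "fin_supp q"
  have "cheb_ode_op m a (applyX m w) = applyA m a w"
    unfolding applyX_def applyA_def
    by (simp add: fs_linear_sum[OF fs_linear_cheb_ode_op] cheb_ode_op_xvec)
  then show ?thesis using fs_linear_add[OF fs_linear_cheb_ode_op q fin_supp_applyX] by simp
qed

lemma applyA_mult_mat_vec_diff:
  assumes "N \<in> carrier_mat m m" "x \<in> carrier_vec m" "y \<in> carrier_vec m"
  shows "applyA m a (N *\<^sub>v (x - y)) = (\<lambda>n. applyA m a (N *\<^sub>v x) n - applyA m a (N *\<^sub>v y) n)"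
  using assms by (simp add: applyA_def mult_minus_distrib_mat_vec left_diff_distrib sum_subtractf)

lemma inv_matrix:
  assumes "invertible_mat M" "M \<in> carrier_mat m m"
  shows "inv_matrix m M \<in> carrier_mat m m" "M * inv_matrix m M = 1\<^sub>m m" "inv_matrix m M * M = 1\<^sub>m m"
proof -
  obtain N where N: "M * N = 1\<^sub>m m" "N * M = 1\<^sub>m (dim_row N)"
    using assms unfolding invertible_mat_def inverts_mat_def by auto
  have "dim_col N = m" using N(1) by (metis index_mult_mat(3) index_one_mat(3))
  moreover have "dim_row N = m"
    using N(2) assms(2) by (metis carrier_matD(2) index_mult_mat(3) index_one_mat(3))
  ultimately have Nc: "N \<in> carrier_mat m m" and NM: "N * M = 1\<^sub>m m" using N(2) by auto
  have "inv_matrix m M = N"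
    unfolding inv_matrix_def
  proof (rule the_equality)
    fix N' assume N': "N' \<in> carrier_mat m m \<and> M * N' = 1\<^sub>m m \<and> N' * M = 1\<^sub>m m"
    have "N' = N' * (M * N)" using N' N(1) right_mult_one_mat by metis
    also have "\<dots> = (N' * M) * N" using assoc_mult_mat[of N' m m M m N m] N' assms(2) Nc by simp
    finally show "N' = N" using N' Nc by simp
  qed (use Nc N(1) NM in simp)
  then show "inv_matrix m M \<in> carrier_mat m m" "M * inv_matrix m M = 1\<^sub>m m" "inv_matrix m M * M = 1\<^sub>m m"
    using Nc N(1) NM by simp_all
qed

locale fs_linear_map =
  fixes m :: nat and B :: "(nat \<Rightarrow> real) \<Rightarrow> real vec"
  assumes carrier: "\<And>u. fin_supp u \<Longrightarrow> B u \<in> carrier_vec m"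
    and add: "\<And>u w. fin_supp u \<Longrightarrow> fin_supp w \<Longrightarrow> B (\<lambda>n. u n + w n) = B u + B w"
    and smult: "\<And>c u. fin_supp u \<Longrightarrow> B (\<lambda>n. c * u n) = c \<cdot>\<^sub>v B u"
begin

lemma lincomb:
  assumes "finite J" "\<And>j. j \<in> J \<Longrightarrow> fin_supp (g j)"
  shows "B (\<lambda>n. \<Sum>j\<in>J. c j * g j n) = vec m (\<lambda>i. \<Sum>j\<in>J. c j * B (g j) $ i)"
  using assms
proof (induction J rule: finite_induct)
  case empty
  have "B (\<lambda>_. 0) = 0 \<cdot>\<^sub>v B (\<lambda>_. 0)" using smult[of "\<lambda>_. 0" 0] by simp
  also have "\<dots> = vec m (\<lambda>i. 0)" using carrier[of "\<lambda>_. 0"] by (intro eq_vecI) auto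
  finally show ?case by simp
next
  case (insert x J)
  have g: "fin_supp (\<lambda>n. c x * g x n)" "fin_supp (\<lambda>n. \<Sum>j\<in>J. c j * g j n)"
    using insert by (auto intro: fin_supp_scale fin_supp_lincomb)
  have "B (\<lambda>n. \<Sum>j\<in>insert x J. c j * g j n)
      = c x \<cdot>\<^sub>v B (g x) + vec m (\<lambda>i. \<Sum>j\<in>J. c j * B (g j) $ i)"
    using insert add[OF g] smult[of "g x" "c x"] by simp
  then show ?case using insert carrier[of "g x"] by (auto intro: eq_vecI)
qed

lemma applyX: "w \<in> carrier_vec m \<Longrightarrow> B (applyX m w) = BXmat m B *\<^sub>v w"
  unfolding applyX_def
  by (subst lincomb) (auto intro!: eq_vecI simp: BXmat_def scalar_prod_def mult.commute
      lessThan_atLeast0)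

lemma lift_boundary:
  assumes "invertible_mat (BXmat m B)" "b \<in> carrier_vec m" "fin_supp q"
  shows "B (\<lambda>n. q n + applyX m (inv_matrix m (BXmat m B) *\<^sub>v (b - B q)) n) = b"
proof -
  let ?M = "BXmat m B"
  have M: "?M \<in> carrier_mat m m" by (simp add: BXmat_def)
  note N = inv_matrix[OF assms(1) M]
  have r: "b - B q \<in> carrier_vec m" using assms(2,3) carrier by simp
  have "B (applyX m (inv_matrix m ?M *\<^sub>v (b - B q))) = ?M *\<^sub>v (inv_matrix m ?M *\<^sub>v (b - B q))"
    using applyX N(1) r by simp
  also have "\<dots> = (?M * inv_matrix m ?M) *\<^sub>v (b - B q)"
    using assoc_mult_mat_vec[of ?M m m "inv_matrix m ?M" m "b - B q"] N(1) r M by simp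
  also have "\<dots> = b - B q" using N(2) r by simp
  finally have "B (applyX m (inv_matrix m ?M *\<^sub>v (b - B q))) = b - B q" .
  moreover have "B q + (b - B q) = b" using carrier[OF assms(3)] assms(2) by (intro eq_vecI) auto
  ultimately show ?thesis
    using add[OF assms(3) fin_supp_applyX] by simp
qed

end

theorem mainTheorem5:
  fixes m :: nat
    and a :: "nat \<Rightarrow> nat \<Rightarrow> real"
    and B :: "(nat \<Rightarrow> real) \<Rightarrow> real vec"
    and b :: "real vec"
  assumes m: "m \<ge> 1"
    and a_abs: "\<forall>k<m. summable (\<lambda>n. \<bar>a k n\<bar>)"
    and B_dim: "\<forall>u. fin_supp u \<longrightarrow> B u \<in> carrier_vec m"
    and B_add: "\<forall>u w. fin_supp u \<longrightarrow> fin_supp w \<longrightarrow> B (\<lambda>n. u n + w n) = B u + B w"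
    and B_smult: "\<forall>c u. fin_supp u \<longrightarrow> B (\<lambda>n. c * u n) = c \<cdot>\<^sub>v B u"
    and BX_inv: "invertible_mat (BXmat m B)"
    and b: "b \<in> carrier_vec m"
  shows "(\<forall>j<m. opL m a (xvec j) = Schain 0 m (Acol a j))
    \<and> (\<forall>v. fin_supp v \<longrightarrow>
          (let u = (\<lambda>n. (intQ ^^ m) v n
                      + applyX m (inv_matrix m (BXmat m B) *\<^sub>v (b - B ((intQ ^^ m) v))) n)
           in B u = b
              \<and> opL m a u = Schain 0 m (\<lambda>n. opLt m a B v n
                                + applyA m a (inv_matrix m (BXmat m B) *\<^sub>v b) n)
              \<and> (\<forall>f. opL m a u = Schain 0 m f \<longleftrightarrow>
                     Schain 0 m (opLt m a B v)
                       = Schain 0 m (\<lambda>n. f n - applyA m a (inv_matrix m (BXmat m B) *\<^sub>v b) n))))"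
proof (intro conjI allI impI, goal_cases)
  case (1 j)
  then show ?case using opL_eq_Schain[OF m fin_supp_xvec] cheb_ode_op_xvec by simp
next
  case (2 v)
  interpret B: fs_linear_map m B using B_dim B_add B_smult by unfold_locales blast+
  let ?N = "inv_matrix m (BXmat m B)"
  define q where "q = (intQ ^^ m) v"
  define u where "u = (\<lambda>n. q n + applyX m (?N *\<^sub>v (b - B q)) n)"
  have q: "fin_supp q" "B q \<in> carrier_vec m" using 2 B.carrier by (simp_all add: q_def)
  have N: "?N \<in> carrier_mat m m" using inv_matrix(1)[OF BX_inv] by (simp add: BXmat_def)
  have "opL m a u = Schain 0 m (\<lambda>n. cheb_ode_op m a q n + applyA m a (?N *\<^sub>v (b - B q)) n)"
    using opL_eq_Schain[OF m] q(1) unfolding u_def by (simp add: cheb_ode_op_add_applyX fin_supp_add)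
  also have "\<dots> = Schain 0 m (\<lambda>n. opLt m a B v n + applyA m a (?N *\<^sub>v b) n)"
    using applyA_mult_mat_vec_diff[OF N b q(2)] 2
    by (simp add: q_def opLt_def cheb_ode_op_intQ_funpow algebra_simps)
  finally have "opL m a u = \<dots>" .
  moreover have "B u = b" unfolding u_def using B.lift_boundary[OF BX_inv b q(1)] .
  ultimately show ?case
    unfolding Let_def u_def[symmetric] q_def[symmetric]
    by (simp add: Schain_add Schain_diff fun_eq_iff eq_diff_eq)
qed

end
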